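(* Let $\pi_+\in(0,1)$, $\pi_-=1-\pi_+$, $p_+,p_-$ probability densities on $\mathcal{X}$, $\ell:\mathbb{R}\times\{+1,-1\}\to\mathbb{R}_+$ a loss and $f:\mathcal{X}\to\mathbb{R}$. Let $$\widetilde{p}_+(\boldsymbol{x})=\frac{\pi_+p_+(\boldsymbol{x})+\pi_-^2p_-(\boldsymbol{x})}{\pi_-^2+\pi_+},\qquad \widetilde{p}_-(\boldsymbol{x})=\frac{\pi_+^2p_+(\boldsymbol{x})+\pi_-p_-(\boldsymbol{x})}{\pi_+^2+\pi_-}.$$ For densities $p_{\mathrm{tr}},p_{\mathrm{tr}'}$ and numbers $\theta\ne\theta'$ define $$R_{\mathrm{UU}}(f)=\mathbb{E}_{p_{\mathrm{tr}}(\boldsymbol{x})}\Big[\frac{(1-\theta')\pi_+}{\theta-\theta'}\ell(f(\boldsymbol{x}),+1)-\frac{\theta'(1-\pi_+)}{\theta-\theta'}\ell(f(\boldsymbol{x}),-1)\Big]+\mathbb{E}_{p_{\mathrm{tr}'}(\boldsymbol{x}')}\Big[\frac{\theta(1-\pi_+)}{\theta-\theta'}\ell(f(\boldsymbol{x}'),-1)-\frac{(1-\theta)\pi_+}{\theta-\theta'}\ell(f(\boldsymbol{x}'),+1)\Big].$$ If $p_{\mathrm{tr}}=\widetilde{p}_+$, $p_{\mathrm{tr}'}=\widetilde{p}_-$, $\theta=\pi_+/(1-\pi_++\pi_+^2)$ and $\theta'=\pi_+^2/(1-\pi_++\pi_+^2)$, then $R_{\mathrm{UU}}(f)=R_{\mathrm{PC}}(f)$,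 where $$R_{\mathrm{PC}}(f)=\mathbb{E}_{\widetilde{p}_+(\boldsymbol{x})}\big[\ell(f(\boldsymbol{x}),+1)-\pi_+\ell(f(\boldsymbol{x}),-1)\big]+\mathbb{E}_{\widetilde{p}_-(\boldsymbol{x}')}\big[\ell(f(\boldsymbol{x}'),-1)-\pi_-\ell(f(\boldsymbol{x}'),+1)\big].$$
   Context: $R_{\mathrm{UU}}$ is the unbiased risk estimator for learning from two unlabeled datasets with class priors $\theta,\theta'$ and marginal densities $p_{\mathrm{tr}},p_{\mathrm{tr}'}$; $\widetilde{p}_\pm$ are the marginals of the two components of pairwise comparison data in a binary problem with class priors $\pi_\pm$ and class-conditional densities $p_\pm$. *)

theory Defs
  imports "HOL-Analysis.Analysis"
begin

definition is_density :: "'a measure \<Rightarrow> ('a \<Rightarrow> real) \<Rightarrow> bool" where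
  "is_density M p \<longleftrightarrow> p \<in> borel_measurable M \<and> (\<forall>x\<in>space M. 0 \<le> p x)
     \<and> integrable M p \<and> (\<integral>x. p x \<partial>M) = 1"

definition expect :: "'a measure \<Rightarrow> ('a \<Rightarrow> real) \<Rightarrow> ('a \<Rightarrow> real) \<Rightarrow> real" where
  "expect M p g = (\<integral>x. p x * g x \<partial>M)"

definition ptilde_pos :: "real \<Rightarrow> ('a \<Rightarrow> real) \<Rightarrow> ('a \<Rightarrow> real) \<Rightarrow> 'a \<Rightarrow> real" where
  "ptilde_pos \<pi>p pp pn x =
     (\<pi>p * pp x + (1 - \<pi>p)^2 * pn x) / ((1 - \<pi>p)^2 + \<pi>p)"

definition ptilde_neg :: "real \<Rightarrow> ('a \<Rightarrow> real) \<Rightarrow> ('a \<Rightarrow> real) \<Rightarrow> 'a \<Rightarrow> real" where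
  "ptilde_neg \<pi>p pp pn x =
     (\<pi>p^2 * pp x + (1 - \<pi>p) * pn x) / (\<pi>p^2 + (1 - \<pi>p))"

definition R_UU :: "'a measure \<Rightarrow> real \<Rightarrow> (real \<Rightarrow> int \<Rightarrow> real) \<Rightarrow> ('a \<Rightarrow> real)
    \<Rightarrow> ('a \<Rightarrow> real) \<Rightarrow> ('a \<Rightarrow> real) \<Rightarrow> real \<Rightarrow> real \<Rightarrow> real" where
  "R_UU M \<pi>p loss f ptr ptr' \<theta> \<theta>' =
     expect M ptr (\<lambda>x. (1 - \<theta>') * \<pi>p / (\<theta> - \<theta>') * loss (f x) 1
                      - \<theta>' * (1 - \<pi>p) / (\<theta> - \<theta>') * loss (f x) (-1))
   + expect M ptr' (\<lambda>x. \<theta> * (1 - \<pi>p) / (\<theta> - \<theta>') * loss (f x) (-1)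
                      - (1 - \<theta>) * \<pi>p / (\<theta> - \<theta>') * loss (f x) 1)"

definition R_PC :: "'a measure \<Rightarrow> real \<Rightarrow> (real \<Rightarrow> int \<Rightarrow> real) \<Rightarrow> ('a \<Rightarrow> real)
    \<Rightarrow> ('a \<Rightarrow> real) \<Rightarrow> ('a \<Rightarrow> real) \<Rightarrow> real" where
  "R_PC M \<pi>p loss f pp pn =
     expect M (ptilde_pos \<pi>p pp pn) (\<lambda>x. loss (f x) 1 - \<pi>p * loss (f x) (-1))
   + expect M (ptilde_neg \<pi>p pp pn) (\<lambda>x. loss (f x) (-1) - (1 - \<pi>p) * loss (f x) 1)"

end

theory Submission
  imports Defs
begin

text \<open>With these class priors the unbiased UU risk collapses coefficientwise to the
  pairwise comparison risk: all four weights of R_UU reduce to 1, \<pi>, 1 and 1 - \<pi>,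
  which is a rational-function identity in \<pi> valid whenever \<pi> is neither 0 nor 1
  (the denominator 1 - \<pi> + \<pi>^2 never vanishes on the reals).  No integrability
  is needed, since the integrands agree pointwise.\<close>

lemma pc_prior_denominator_pos:
  fixes \<pi> :: real
  shows "0 < 1 - \<pi> + \<pi>\<^sup>2"
proof -
  have "1 - \<pi> + \<pi>\<^sup>2 = (\<pi> - 1/2)\<^sup>2 + 3/4" by (simp add: power2_eq_square algebra_simps)
  then show ?thesis by (metis add_nonneg_pos zero_le_power2 zero_less_divide_iff zero_less_numeral)
qed

lemma pc_priors_diff:
  fixes \<pi> :: real
  shows "\<pi> / (1 - \<pi> + \<pi>\<^sup>2) - \<pi>\<^sup>2 / (1 - \<pi> + \<pi>\<^sup>2) = \<pi> * (1 - \<pi>) / (1 - \<pi> + \<pi>\<^sup>2)"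
  by (simp add: diff_divide_distrib [symmetric] power2_eq_square algebra_simps)

lemma R_UU_pc_priors:
  fixes \<pi> :: real
  assumes "\<pi> \<noteq> 0" and "\<pi> \<noteq> 1"
    and \<theta>: "\<theta> = \<pi> / (1 - \<pi> + \<pi>\<^sup>2)" and \<theta>': "\<theta>' = \<pi>\<^sup>2 / (1 - \<pi> + \<pi>\<^sup>2)"
  shows "R_UU M \<pi> loss f ptr ptr' \<theta> \<theta>' =
           expect M ptr (\<lambda>x. loss (f x) 1 - \<pi> * loss (f x) (-1))
         + expect M ptr' (\<lambda>x. loss (f x) (-1) - (1 - \<pi>) * loss (f x) 1)"
proof -
  define D where "D = 1 - \<pi> + \<pi>\<^sup>2"
  have D: "D \<noteq> 0" using pc_prior_denominator_pos [of \<pi>] by (simp add: D_def)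
  have \<theta>D: "\<theta> = \<pi> / D" "\<theta>' = \<pi>\<^sup>2 / D" by (simp_all add: \<theta> \<theta>' D_def)
  have diff: "\<theta> - \<theta>' = \<pi> * (1 - \<pi>) / D"
    using pc_priors_diff [of \<pi>] by (simp add: \<theta> \<theta>' D_def)
  have nonzero: "\<theta> - \<theta>' \<noteq> 0" using assms(1,2) D by (simp add: diff)
  have "(1 - \<theta>') * \<pi> = \<theta> - \<theta>'" "\<theta>' * (1 - \<pi>) = \<pi> * (\<theta> - \<theta>')"
    "\<theta> * (1 - \<pi>) = \<theta> - \<theta>'" "(1 - \<theta>) * \<pi> = (1 - \<pi>) * (\<theta> - \<theta>')"
    using D unfolding diff \<theta>D by (auto simp add: field_simps power2_eq_square)
      (simp_all add: D_def algebra_simps power2_eq_square)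
  then have coeffs: "(1 - \<theta>') * \<pi> / (\<theta> - \<theta>') = 1" "\<theta>' * (1 - \<pi>) / (\<theta> - \<theta>') = \<pi>"
    "\<theta> * (1 - \<pi>) / (\<theta> - \<theta>') = 1" "(1 - \<theta>) * \<pi> / (\<theta> - \<theta>') = 1 - \<pi>"
    using nonzero by simp_all
  show ?thesis unfolding R_UU_def coeffs by simp
qed

theorem corollary1:
  fixes M :: "'a measure" and \<pi>p :: real and pp pn :: "'a \<Rightarrow> real"
    and loss :: "real \<Rightarrow> int \<Rightarrow> real" and f :: "'a \<Rightarrow> real"
    and ptr ptr' :: "'a \<Rightarrow> real" and \<theta> \<theta>' :: real
  assumes "0 < \<pi>p" and "\<pi>p < 1"
    and "is_density M pp" and "is_density M pn"
    and "\<And>t y. 0 \<le> loss t y"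
    and "\<And>y. y \<in> {1, -1} \<Longrightarrow> integrable M (\<lambda>x. pp x * loss (f x) y)"
    and "\<And>y. y \<in> {1, -1} \<Longrightarrow> integrable M (\<lambda>x. pn x * loss (f x) y)"
    and "ptr = ptilde_pos \<pi>p pp pn" and "ptr' = ptilde_neg \<pi>p pp pn"
    and "\<theta> = \<pi>p / (1 - \<pi>p + \<pi>p^2)" and "\<theta>' = \<pi>p^2 / (1 - \<pi>p + \<pi>p^2)"
  shows "R_UU M \<pi>p loss f ptr ptr' \<theta> \<theta>' = R_PC M \<pi>p loss f pp pn"
  using R_UU_pc_priors [of \<pi>p \<theta> \<theta>' M loss f ptr ptr'] assms(1,2,8-11)
  by (simp add: R_PC_def)

end
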